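(* Let $r\ge 3$ and let $F(x,y)=(f(x,y),x,y)$ be a germ at $o=(0,0)$ of a $C^r$ map into $\mathbf{R}^3_1$ with $f(0,0)=0$, $f_x(0,0)=0$, $f_y(0,0)=1$, such that $\{B_F\neq0\}$ is open and dense in the domain and $A_F-\varphi B_F^2\equiv0$ for some $C^{r-2}$ function germ $\varphi$ at $o$. Suppose that $o$ is a non-degenerate light-like point, i.e. $\nabla B_F(o)\neq(0,0)$. Then the Gaussian curvature $K=-C_F/B_F^2$ of $F$ diverges to $+\infty$ at $o$, i.e. $K(p)\to+\infty$ as $p\to o$ with $B_F(p)\neq0$.
   Context: $\mathbf{R}^3_1$ is Lorentz–Minkowski 3-space with coordinates $(t,x,y)$ and inner product $-dt^2+dx^2+dy^2$. $B_F:=1-f_x^2-f_y^2$, $A_F:=(1-f_x^2)f_{yy}+2f_xf_yf_{xy}+(1-f_y^2)f_{xx}$, $C_F:=f_{xx}f_{yy}-f_{xy}^2$; the Gaussian curvature of $F$ at points where $B_F\ne0$ is $K=-C_F/B_F^2$. *)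

theory Defs
  imports "HOL-Analysis.Analysis"
begin

definition pdx :: "(real \<times> real \<Rightarrow> real) \<Rightarrow> real \<times> real \<Rightarrow> real" where
  "pdx g p = deriv (\<lambda>t. g (t, snd p)) (fst p)"

definition pdy :: "(real \<times> real \<Rightarrow> real) \<Rightarrow> real \<times> real \<Rightarrow> real" where
  "pdy g p = deriv (\<lambda>t. g (fst p, t)) (snd p)"

fun Ck :: "nat \<Rightarrow> (real \<times> real) set \<Rightarrow> (real \<times> real \<Rightarrow> real) \<Rightarrow> bool" where
  "Ck 0 U g = continuous_on U g"
| "Ck (Suc k) U g = ((\<forall>p\<in>U. g differentiable (at p)) \<and> Ck k U (pdx g) \<and> Ck k U (pdy g))"

definition BF :: "(real \<times> real \<Rightarrow> real) \<Rightarrow> real \<times> real \<Rightarrow> real" where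
  "BF f p = 1 - (pdx f p)^2 - (pdy f p)^2"

definition AF :: "(real \<times> real \<Rightarrow> real) \<Rightarrow> real \<times> real \<Rightarrow> real" where
  "AF f p = (1 - (pdx f p)^2) * pdy (pdy f) p + 2 * pdx f p * pdy f p * pdy (pdx f) p
            + (1 - (pdy f p)^2) * pdx (pdx f) p"

definition CF :: "(real \<times> real \<Rightarrow> real) \<Rightarrow> real \<times> real \<Rightarrow> real" where
  "CF f p = pdx (pdx f) p * pdy (pdy f) p - (pdy (pdx f) p)^2"

definition gaussK :: "(real \<times> real \<Rightarrow> real) \<Rightarrow> real \<times> real \<Rightarrow> real" where
  "gaussK f p = - CF f p / (BF f p)^2"

end

theory Submission
  imports Defs
begin

text \<open>At the point o we have f_x = 0 and f_y = 1, so B_F(o) = 0, and the identity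
A_F = \<phi> B_F^2 gives f_yy(o) = A_F(o) = 0. The gradient of B_F at o is -2 (f_yx, f_yy)(o),
so non-degeneracy means f_xy(o) \<noteq> 0 (using symmetry of the mixed partials), whence
C_F(o) = -f_xy(o)^2 < 0. Thus K = -C_F / B_F^2 has a numerator tending to a positive
limit over a positive denominator tending to 0. Of the identity A_F = \<phi> B_F^2 only its value
at o is needed, so the regularity of \<phi> and the density of {B_F \<noteq> 0} play no role.\<close>

lemma has_real_derivative_pdx:
  fixes g :: "real \<times> real \<Rightarrow> real"
  assumes "g differentiable (at (x, y))"
  shows "((\<lambda>t. g (t, y)) has_real_derivative pdx g (x, y)) (at x)"
proof -
  have "(\<lambda>t. (t, y)) differentiable (at x)"
    by (auto intro!: derivative_intros)
  then have "(g \<circ> (\<lambda>t. (t, y))) differentiable (at x)"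
    using assms by (rule differentiable_chain_at)
  then show ?thesis
    unfolding pdx_def by (simp add: o_def DERIV_deriv_iff_real_differentiable)
qed

lemma has_real_derivative_pdy:
  fixes g :: "real \<times> real \<Rightarrow> real"
  assumes "g differentiable (at (x, y))"
  shows "((\<lambda>t. g (x, t)) has_real_derivative pdy g (x, y)) (at y)"
proof -
  have "(\<lambda>t. (x, t)) differentiable (at y)"
    by (auto intro!: derivative_intros)
  then have "(g \<circ> (\<lambda>t. (x, t))) differentiable (at y)"
    using assms by (rule differentiable_chain_at)
  then show ?thesis
    unfolding pdy_def by (simp add: o_def DERIV_deriv_iff_real_differentiable)
qed

lemma Ck_Suc_imp_Ck: "Ck (Suc k) U g \<Longrightarrow> Ck k U g"
proof (induction k arbitrary: g)
  case 0
  then have "\<forall>p\<in>U. isCont g p"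
    using differentiable_imp_continuous_within by auto
  then show ?case
    by (simp add: continuous_at_imp_continuous_on)
next
  case (Suc k)
  have "\<forall>p\<in>U. g differentiable (at p)" "Ck (Suc k) U (pdx g)" "Ck (Suc k) U (pdy g)"
    using Suc.prems unfolding Ck.simps(2)[of "Suc k"] by blast+
  then show ?case
    using Suc.IH unfolding Ck.simps(2)[of k] by blast
qed

lemma Ck_le: "k \<le> n \<Longrightarrow> Ck n U g \<Longrightarrow> Ck k U g"
proof (induction n rule: dec_induct)
  case (step n)
  then show ?case using Ck_Suc_imp_Ck by blast
qed

lemma Ck_Suc_imp_isCont: "Ck (Suc k) U g \<Longrightarrow> p \<in> U \<Longrightarrow> isCont g p"
  by (simp add: differentiable_imp_continuous_within)

lemma MVT_interval:
  fixes \<psi> \<psi>' :: "real \<Rightarrow> real"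
  assumes "0 < h" and "\<And>t. t \<in> {a..a + h} \<Longrightarrow> (\<psi> has_real_derivative \<psi>' t) (at t)"
  shows "\<exists>c\<in>{a..a + h}. \<psi> (a + h) - \<psi> a = h * \<psi>' c"
  using MVT2[of a "a + h" \<psi> \<psi>'] assms by force

text \<open>Both mixed partials arise from the second difference
  g(x+h, y+h) - g(x+h, y) - g(x, y+h) + g(x, y) by applying the mean value theorem twice,
  in either order of the variables.\<close>

lemma mixed_second_difference_mean_value:
  fixes g :: "real \<times> real \<Rightarrow> real"
  assumes "0 < h"
    and square: "\<And>s t. s \<in> {x..x + h} \<Longrightarrow> t \<in> {y..y + h} \<Longrightarrow> (s, t) \<in> U"
    and dg: "\<forall>p\<in>U. g differentiable (at p)"
    and dgx: "\<forall>p\<in>U. pdx g differentiable (at p)"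
    and dgy: "\<forall>p\<in>U. pdy g differentiable (at p)"
  obtains s1 t1 s2 t2 where "s1 \<in> {x..x + h}" "t1 \<in> {y..y + h}" "s2 \<in> {x..x + h}" "t2 \<in> {y..y + h}"
    and "pdy (pdx g) (s1, t1) = pdx (pdy g) (s2, t2)"
proof -
  have in_square: "(s, t) \<in> U" if "s \<in> {x..x + h}" "t \<in> {y..y + h}" for s t
    using that by (rule square)
  have "y + h \<in> {y..y + h}" "y \<in> {y..y + h}" "x + h \<in> {x..x + h}" "x \<in> {x..x + h}"
    using \<open>0 < h\<close> by auto
  note corners = this
  have "((\<lambda>s. g (s, y + h) - g (s, y)) has_real_derivative pdx g (s, y + h) - pdx g (s, y)) (at s)"
    if "s \<in> {x..x + h}" for s
    using that corners by (intro DERIV_diff has_real_derivative_pdx dg[rule_format] in_square)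
  from MVT_interval[where a = x, OF \<open>0 < h\<close> this] obtain s1 where s1: "s1 \<in> {x..x + h}"
    "g (x + h, y + h) - g (x + h, y) - (g (x, y + h) - g (x, y)) = h * (pdx g (s1, y + h) - pdx g (s1, y))"
    by auto
  have "((\<lambda>t. pdx g (s1, t)) has_real_derivative pdy (pdx g) (s1, t)) (at t)" if "t \<in> {y..y + h}" for t
    using that s1(1) by (intro has_real_derivative_pdy dgx[rule_format] in_square)
  from MVT_interval[where a = y, OF \<open>0 < h\<close> this] obtain t1 where t1: "t1 \<in> {y..y + h}"
    "pdx g (s1, y + h) - pdx g (s1, y) = h * pdy (pdx g) (s1, t1)"
    by auto
  have "((\<lambda>t. g (x + h, t) - g (x, t)) has_real_derivative pdy g (x + h, t) - pdy g (x, t)) (at t)"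
    if "t \<in> {y..y + h}" for t
    using that corners by (intro DERIV_diff has_real_derivative_pdy dg[rule_format] in_square)
  from MVT_interval[where a = y, OF \<open>0 < h\<close> this] obtain t2 where t2: "t2 \<in> {y..y + h}"
    "g (x + h, y + h) - g (x, y + h) - (g (x + h, y) - g (x, y)) = h * (pdy g (x + h, t2) - pdy g (x, t2))"
    by auto
  have "((\<lambda>s. pdy g (s, t2)) has_real_derivative pdx (pdy g) (s, t2)) (at s)" if "s \<in> {x..x + h}" for s
    using that t2(1) by (intro has_real_derivative_pdx dgy[rule_format] in_square)
  from MVT_interval[where a = x, OF \<open>0 < h\<close> this] obtain s2 where s2: "s2 \<in> {x..x + h}"
    "pdy g (x + h, t2) - pdy g (x, t2) = h * pdx (pdy g) (s2, t2)"
    by auto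
  have "pdy (pdx g) (s1, t1) = pdx (pdy g) (s2, t2)"
    using s1(2) t1(2) t2(2) s2(2) \<open>0 < h\<close> by (simp add: algebra_simps)
  with s1(1) t1(1) s2(1) t2(1) show ?thesis by (rule that)
qed

lemma pdy_pdx_eq_pdx_pdy:
  fixes g :: "real \<times> real \<Rightarrow> real"
  assumes "open U" "(x, y) \<in> U"
    and dg: "\<forall>p\<in>U. g differentiable (at p)"
    and dgx: "\<forall>p\<in>U. pdx g differentiable (at p)"
    and dgy: "\<forall>p\<in>U. pdy g differentiable (at p)"
    and "isCont (pdy (pdx g)) (x, y)" "isCont (pdx (pdy g)) (x, y)"
  shows "pdy (pdx g) (x, y) = pdx (pdy g) (x, y)"
proof (rule ccontr)
  define a where "a = pdy (pdx g) (x, y)"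
  define b where "b = pdx (pdy g) (x, y)"
  assume "pdy (pdx g) (x, y) \<noteq> pdx (pdy g) (x, y)"
  then have "0 < dist a b / 2" by (simp add: a_def b_def)
  then obtain d1 d2 where d: "d1 > 0" "d2 > 0"
    and near_a: "\<And>p. dist p (x, y) < d1 \<Longrightarrow> dist (pdy (pdx g) p) a < dist a b / 2"
    and near_b: "\<And>p. dist p (x, y) < d2 \<Longrightarrow> dist (pdx (pdy g) p) b < dist a b / 2"
    using assms(6,7) unfolding continuous_at_eps_delta a_def b_def by metis
  obtain e where "e > 0" "ball (x, y) e \<subseteq> U"
    using assms(1,2) open_contains_ball by blast
  define h where "h = min e (min d1 d2) / 4"
  have "0 < h" using \<open>e > 0\<close> d by (simp add: h_def)
  have close: "dist (s, t) (x, y) < min e (min d1 d2)" if "s \<in> {x..x + h}" "t \<in> {y..y + h}" for s t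
  proof -
    have "dist (s, t) (x, y) \<le> \<bar>s - x\<bar> + \<bar>t - y\<bar>"
      using norm_Pair_le[of "s - x" "t - y"] by (simp add: dist_norm)
    also have "\<dots> \<le> 2 * h" using that by auto
    finally show ?thesis using \<open>0 < h\<close> by (simp add: h_def)
  qed
  have "(s, t) \<in> U" if "s \<in> {x..x + h}" "t \<in> {y..y + h}" for s t
    using close[OF that] \<open>ball (x, y) e \<subseteq> U\<close> by (auto simp: dist_commute)
  then obtain s1 t1 s2 t2 where "s1 \<in> {x..x + h}" "t1 \<in> {y..y + h}" "s2 \<in> {x..x + h}" "t2 \<in> {y..y + h}"
    and eq: "pdy (pdx g) (s1, t1) = pdx (pdy g) (s2, t2)"
    using mixed_second_difference_mean_value[OF \<open>0 < h\<close> _ dg dgx dgy] by metis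
  then have "dist (pdy (pdx g) (s1, t1)) a < dist a b / 2" "dist (pdy (pdx g) (s1, t1)) b < dist a b / 2"
    using near_a[of "(s1, t1)"] near_b[of "(s2, t2)"] close[of s1 t1] close[of s2 t2] eq by auto
  moreover have "dist a b \<le> dist (pdy (pdx g) (s1, t1)) a + dist (pdy (pdx g) (s1, t1)) b"
    by (metis dist_commute dist_triangle2)
  ultimately show False by linarith
qed

lemma pdx_BF:
  assumes "pdx f differentiable (at (x, y))" "pdy f differentiable (at (x, y))"
  shows "pdx (BF f) (x, y) =
    - 2 * (pdx f (x, y) * pdx (pdx f) (x, y) + pdy f (x, y) * pdx (pdy f) (x, y))"
  using DERIV_diff[OF DERIV_diff[OF DERIV_const[of 1]
        DERIV_power[OF has_real_derivative_pdx[OF assms(1)], of 2]]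
      DERIV_power[OF has_real_derivative_pdx[OF assms(2)], of 2]]
  unfolding pdx_def[of "BF f"] BF_def by (simp add: DERIV_imp_deriv algebra_simps)

lemma pdy_BF:
  assumes "pdx f differentiable (at (x, y))" "pdy f differentiable (at (x, y))"
  shows "pdy (BF f) (x, y) =
    - 2 * (pdx f (x, y) * pdy (pdx f) (x, y) + pdy f (x, y) * pdy (pdy f) (x, y))"
  using DERIV_diff[OF DERIV_diff[OF DERIV_const[of 1]
        DERIV_power[OF has_real_derivative_pdy[OF assms(1)], of 2]]
      DERIV_power[OF has_real_derivative_pdy[OF assms(2)], of 2]]
  unfolding pdy_def[of "BF f"] BF_def by (simp add: DERIV_imp_deriv algebra_simps)

lemma isCont_BF: "Ck (Suc (Suc k)) U f \<Longrightarrow> p \<in> U \<Longrightarrow> isCont (BF f) p"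
  unfolding BF_def[abs_def]
  by (intro continuous_intros Ck_Suc_imp_isCont[of k U]) simp_all

lemma isCont_CF: "Ck (Suc (Suc (Suc k))) U f \<Longrightarrow> p \<in> U \<Longrightarrow> isCont (CF f) p"
  unfolding CF_def[abs_def]
  by (intro continuous_intros Ck_Suc_imp_isCont[of k U]) simp_all

lemma gaussK_tendsto_at_top:
  assumes "isCont (CF f) p" "CF f p < 0" "isCont (BF f) p" "BF f p = 0" "S \<subseteq> {q. BF f q \<noteq> 0}"
  shows "filterlim (gaussK f) at_top (at p within S)"
proof -
  have "(CF f \<longlongrightarrow> CF f p) (at p within S)" "(BF f \<longlongrightarrow> 0) (at p within S)"
    using assms(1,3,4) by (auto simp: isCont_def intro: tendsto_within_subset)
  moreover have "eventually (\<lambda>q. 0 < (BF f q)\<^sup>2) (at p within S)"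
    using assms(5) by (auto simp: eventually_at_filter intro!: always_eventually)
  ultimately have "LIM q (at p within S). - CF f q / (BF f q)\<^sup>2 :> at_top"
    using assms(2) by (intro LIM_at_top_divide[where a = "- CF f p"] tendsto_intros) auto
  then show ?thesis by (simp add: gaussK_def[abs_def])
qed

theorem proposition3p8:
  fixes f \<phi> :: "real \<times> real \<Rightarrow> real" and U :: "(real \<times> real) set" and r :: nat
  assumes "r \<ge> 3"
    and "open U" and "(0, 0) \<in> U"
    and "Ck r U f"
    and "f (0, 0) = 0" and "pdx f (0, 0) = 0" and "pdy f (0, 0) = 1"
    and "open {p \<in> U. BF f p \<noteq> 0}" and "U \<subseteq> closure {p \<in> U. BF f p \<noteq> 0}"
    and "Ck (r - 2) U \<phi>"
    and "\<forall>p\<in>U. AF f p - \<phi> p * (BF f p)^2 = 0"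
    and "(pdx (BF f) (0, 0), pdy (BF f) (0, 0)) \<noteq> (0, 0)"
  shows "filterlim (gaussK f) at_top (at (0, 0) within {p \<in> U. BF f p \<noteq> 0})"
proof -
  have f_C3: "Ck (Suc (Suc (Suc 0))) U f"
    using Ck_le[of 3 r U f] assms(1,4) by (simp add: numeral_eq_Suc)
  then have "\<forall>p\<in>U. pdx f differentiable (at p)" "\<forall>p\<in>U. pdy f differentiable (at p)"
    and "\<forall>p\<in>U. isCont (pdy (pdx f)) p" "\<forall>p\<in>U. isCont (pdx (pdy f)) p"
    by (auto intro: differentiable_imp_continuous_within)
  then have mixed: "pdy (pdx f) (0, 0) = pdx (pdy f) (0, 0)"
    and grad: "pdx (BF f) (0, 0) = - 2 * pdx (pdy f) (0, 0)" "pdy (BF f) (0, 0) = - 2 * pdy (pdy f) (0, 0)"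
    using f_C3 assms(2,3,6,7) by (auto intro!: pdy_pdx_eq_pdx_pdy simp: pdx_BF pdy_BF)
  have B0: "BF f (0, 0) = 0"
    using assms(6,7) by (simp add: BF_def)
  then have "pdy (pdy f) (0, 0) = 0"
    using assms(3,6,7,11) by (auto simp: AF_def)
  then have "CF f (0, 0) < 0"
    using assms(12) grad mixed by (simp add: CF_def)
  with B0 show ?thesis
    using isCont_CF[OF f_C3 assms(3)] isCont_BF[OF Ck_Suc_imp_Ck[OF f_C3] assms(3)]
    by (intro gaussK_tendsto_at_top) auto
qed

end
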